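(* Let $\Gamma(V,d,c)$ be a coherent cost-geometry with $|V|=n$, positive scale costs $c_k$, and coherence constants $\gamma,\alpha$ as below, and let $\theta>0$. Define $$\lambda_\theta=\min_{k_\theta\le k\le K}\left[\frac{\log p_k}{c_k}\left(1+\frac{\theta\log\log n}{\log p_k}\right)\right],\qquad B^+_\theta=\max\{B_0,g(\lambda_\theta)\}.$$ Then for every $B\ge B^+_\theta$, the product measure $G(n,\mathbf{Q}^*(B))$ is $\theta$-uniformly rich for $(V,d)$.
   Context: Geometry $(V,d)$: finite $V$, $|V|=n$, $d$ symmetric, nonnegative, $d(x,y)=0$ iff $x=y$. For $\gamma>1$, $K=\lceil\log_\gamma n\rceil$, $P_k(v)=\#\{u: d(v,u)\in(\gamma^{k-1},\gamma^k]\}$; $(V,d)$ is $\gamma$-coherent if (H1) there are $A>1,\alpha>0$ with $\alpha\gamma^k\le P_k(v)\le A\gamma^k$ for all $v$, $k\in[K]$, and (H2) there are $\phi>0$, $0<\lambda<1$ with $|\{u: d(v,u)\le\gamma^{k_{vt}},\ d(u,t)\le\lambda d(v,t)\}|\ge\phi\gamma^{k_{vt}}$ for all $v\ne t$, where $d(v,t)\in(\gamma^{k_{vt}-1},\gamma^{k_{vt}}]$. A coherent cost-geometry additionally has a cost $c_k>0$ assigned to every pair at distance in $(\gamma^{k-1},\gamma^k]$. Notation: $P_k=\frac12\sum_vP_k(v)$, $p_k=P_k/n$; $g(\lambda)=\sum_{k=1}^Kc_kp_k/(1+e^{\lambda c_k})$ for $\lambda\ge0$; $\bar B=g(0)$;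 $\lambda(B)=g^{-1}(B)$ for $0<B\le\bar B$ and $\lambda(B)=0$ for $B\ge\bar B$; $\mathbf{Q}^*(B)$ has entry $1/(1+\exp(\lambda(B)c_k))$ for every pair of scale $k$. $\lambda_0=\min_{k\in[K]}\frac{1}{c_k}\log\!\left(\frac{n\log p_k}{5K\log^2n}\right)$ and $B_0=g(\lambda_0)$. $k_\theta=\frac{\theta\log\log n-\log\alpha}{\log\gamma}$. $\theta$-uniform richness: $G(n,\mathbf{Q})$ (each pair $\{i,j\}$ present independently with probability $Q_{ij}$) is $\theta$-uniformly rich for $(V,d)$ if there is a constant $M>0$ (independent of $n$) such that for every $k\ge k_\theta$ and every pair $\{i,j\}$ with $d(i,j)\in(\gamma^{k-1},\gamma^k]$, $Q_{ij}\ge\frac{1}{M\log^\theta(n)\,\gamma^k}$. *)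

theory Defs
  imports Complex_Main
begin

definition geometry :: "'a set \<Rightarrow> ('a \<Rightarrow> 'a \<Rightarrow> real) \<Rightarrow> bool" where
  "geometry V d \<longleftrightarrow> finite V \<and>
     (\<forall>x\<in>V. \<forall>y\<in>V. d x y = d y x \<and> 0 \<le> d x y \<and> (d x y = 0 \<longleftrightarrow> x = y))"

definition Kmax :: "real \<Rightarrow> nat \<Rightarrow> nat" where
  "Kmax \<gamma> n = nat \<lceil>log \<gamma> (real n)\<rceil>"

definition scale :: "real \<Rightarrow> real \<Rightarrow> int" where
  "scale \<gamma> x = \<lceil>log \<gamma> x\<rceil>"

definition Pv :: "'a set \<Rightarrow> ('a \<Rightarrow> 'a \<Rightarrow> real) \<Rightarrow> real \<Rightarrow> nat \<Rightarrow> 'a \<Rightarrow> nat" where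
  "Pv V d \<gamma> k v = card {u \<in> V. \<gamma> ^ (k - 1) < d v u \<and> d v u \<le> \<gamma> ^ k}"

definition coherent ::
  "'a set \<Rightarrow> ('a \<Rightarrow> 'a \<Rightarrow> real) \<Rightarrow> real \<Rightarrow> real \<Rightarrow> real \<Rightarrow> real \<Rightarrow> real \<Rightarrow> bool" where
  "coherent V d \<gamma> A \<alpha> \<phi> lam \<longleftrightarrow> geometry V d \<and> \<gamma> > 1 \<and> A > 1 \<and> \<alpha> > 0 \<and>
     (\<forall>v\<in>V. \<forall>k\<in>{1..Kmax \<gamma> (card V)}.
        \<alpha> * \<gamma> ^ k \<le> real (Pv V d \<gamma> k v) \<and> real (Pv V d \<gamma> k v) \<le> A * \<gamma> ^ k) \<and>
     \<phi> > 0 \<and> 0 < lam \<and> lam < 1 \<and>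
     (\<forall>v\<in>V. \<forall>t\<in>V. v \<noteq> t \<longrightarrow>
        real (card {u \<in> V. d v u \<le> \<gamma> powr (real_of_int (scale \<gamma> (d v t))) \<and>
                           d u t \<le> lam * d v t})
        \<ge> \<phi> * \<gamma> powr (real_of_int (scale \<gamma> (d v t))))"

definition coherent_cost_geometry ::
  "'a set \<Rightarrow> ('a \<Rightarrow> 'a \<Rightarrow> real) \<Rightarrow> (nat \<Rightarrow> real) \<Rightarrow> real \<Rightarrow> real \<Rightarrow> real \<Rightarrow> real \<Rightarrow> real \<Rightarrow> bool" where
  "coherent_cost_geometry V d c \<gamma> A \<alpha> \<phi> lam \<longleftrightarrow>
     coherent V d \<gamma> A \<alpha> \<phi> lam \<and> (\<forall>k\<in>{1..Kmax \<gamma> (card V)}. c k > 0)"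

definition pk :: "'a set \<Rightarrow> ('a \<Rightarrow> 'a \<Rightarrow> real) \<Rightarrow> real \<Rightarrow> nat \<Rightarrow> real" where
  "pk V d \<gamma> k = ((1/2) * (\<Sum>v\<in>V. real (Pv V d \<gamma> k v))) / real (card V)"

definition gfun :: "'a set \<Rightarrow> ('a \<Rightarrow> 'a \<Rightarrow> real) \<Rightarrow> (nat \<Rightarrow> real) \<Rightarrow> real \<Rightarrow> real \<Rightarrow> real" where
  "gfun V d c \<gamma> l = (\<Sum>k\<in>{1..Kmax \<gamma> (card V)}. c k * pk V d \<gamma> k / (1 + exp (l * c k)))"

definition Bbar :: "'a set \<Rightarrow> ('a \<Rightarrow> 'a \<Rightarrow> real) \<Rightarrow> (nat \<Rightarrow> real) \<Rightarrow> real \<Rightarrow> real" where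
  "Bbar V d c \<gamma> = gfun V d c \<gamma> 0"

definition lamB :: "'a set \<Rightarrow> ('a \<Rightarrow> 'a \<Rightarrow> real) \<Rightarrow> (nat \<Rightarrow> real) \<Rightarrow> real \<Rightarrow> real \<Rightarrow> real" where
  "lamB V d c \<gamma> B =
     (if Bbar V d c \<gamma> \<le> B then 0 else THE l. 0 \<le> l \<and> gfun V d c \<gamma> l = B)"

definition Qstar :: "'a set \<Rightarrow> ('a \<Rightarrow> 'a \<Rightarrow> real) \<Rightarrow> (nat \<Rightarrow> real) \<Rightarrow> real \<Rightarrow> real \<Rightarrow> nat \<Rightarrow> real" where
  "Qstar V d c \<gamma> B k = 1 / (1 + exp (lamB V d c \<gamma> B * c k))"

definition lambda0 :: "'a set \<Rightarrow> ('a \<Rightarrow> 'a \<Rightarrow> real) \<Rightarrow> (nat \<Rightarrow> real) \<Rightarrow> real \<Rightarrow> real" where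
  "lambda0 V d c \<gamma> = (let n = real (card V); K = Kmax \<gamma> (card V) in
     Min ((\<lambda>k. (1 / c k) * ln (n * ln (pk V d \<gamma> k) / (5 * real K * (ln n)^2))) ` {1..K}))"

definition B0 :: "'a set \<Rightarrow> ('a \<Rightarrow> 'a \<Rightarrow> real) \<Rightarrow> (nat \<Rightarrow> real) \<Rightarrow> real \<Rightarrow> real" where
  "B0 V d c \<gamma> = gfun V d c \<gamma> (lambda0 V d c \<gamma>)"

definition k_theta :: "real \<Rightarrow> real \<Rightarrow> real \<Rightarrow> nat \<Rightarrow> real" where
  "k_theta \<theta> \<alpha> \<gamma> n = (\<theta> * ln (ln (real n)) - ln \<alpha>) / ln \<gamma>"

definition lambda_theta ::
  "'a set \<Rightarrow> ('a \<Rightarrow> 'a \<Rightarrow> real) \<Rightarrow> (nat \<Rightarrow> real) \<Rightarrow> real \<Rightarrow> real \<Rightarrow> real \<Rightarrow> real" where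
  "lambda_theta V d c \<gamma> \<alpha> \<theta> = (let n = card V in
     Min ((\<lambda>k. (ln (pk V d \<gamma> k) / c k) * (1 + \<theta> * ln (ln (real n)) / ln (pk V d \<gamma> k)))
          ` {k \<in> {1..Kmax \<gamma> n}. k_theta \<theta> \<alpha> \<gamma> n \<le> real k}))"

definition Bplus_theta ::
  "'a set \<Rightarrow> ('a \<Rightarrow> 'a \<Rightarrow> real) \<Rightarrow> (nat \<Rightarrow> real) \<Rightarrow> real \<Rightarrow> real \<Rightarrow> real \<Rightarrow> real" where
  "Bplus_theta V d c \<gamma> \<alpha> \<theta> =
     max (B0 V d c \<gamma>) (gfun V d c \<gamma> (lambda_theta V d c \<gamma> \<alpha> \<theta>))"

definition rich_with_const ::
  "real \<Rightarrow> real \<Rightarrow> 'a set \<Rightarrow> ('a \<Rightarrow> 'a \<Rightarrow> real) \<Rightarrow> real \<Rightarrow> real \<Rightarrow> ('a \<Rightarrow> 'a \<Rightarrow> real) \<Rightarrow> bool" where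
  "rich_with_const M \<theta> V d \<gamma> \<alpha> Q \<longleftrightarrow>
     (\<forall>i\<in>V. \<forall>j\<in>V. \<forall>k::nat. i \<noteq> j \<and> 1 \<le> k \<and> k \<le> Kmax \<gamma> (card V) \<and>
        k_theta \<theta> \<alpha> \<gamma> (card V) \<le> real k \<and>
        \<gamma> ^ (k - 1) < d i j \<and> d i j \<le> \<gamma> ^ k \<longrightarrow>
        Q i j \<ge> 1 / (M * (ln (real (card V))) powr \<theta> * \<gamma> ^ k))"

definition Qmat :: "'a set \<Rightarrow> ('a \<Rightarrow> 'a \<Rightarrow> real) \<Rightarrow> (nat \<Rightarrow> real) \<Rightarrow> real \<Rightarrow> real \<Rightarrow> 'a \<Rightarrow> 'a \<Rightarrow> real" where
  "Qmat V d c \<gamma> B i j = Qstar V d c \<gamma> B (nat (scale \<gamma> (d i j)))"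

end

theory Submission
  imports Defs
begin

text \<open>The logistic weights \<open>1/(1 + exp(\<lambda> c\<^sub>k))\<close> decrease in \<open>\<lambda>\<close>, so \<open>g\<close> is a strictly
  decreasing continuous function and \<open>B \<ge> g(\<lambda>\<^sub>\<theta>)\<close> forces \<open>\<lambda>(B) \<le> max 0 \<lambda>\<^sub>\<theta>\<close>. For a pair of
  scale \<open>k \<ge> k\<^sub>\<theta>\<close> the definition of \<open>\<lambda>\<^sub>\<theta>\<close> gives \<open>\<lambda>\<^sub>\<theta> c\<^sub>k \<le> log p\<^sub>k + \<theta> log log n\<close>, hence
  \<open>exp(\<lambda>(B) c\<^sub>k) \<le> 1 + p\<^sub>k log\<^sup>\<theta> n\<close>. Finally (H1) gives \<open>p\<^sub>k \<le> A \<gamma>\<^sup>k / 2\<close>, so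
  \<open>Q\<^sup>*(B)\<^sub>i\<^sub>j \<ge> 1 / (2 + p\<^sub>k log\<^sup>\<theta> n) \<ge> 1 / (M log\<^sup>\<theta> n \<gamma>\<^sup>k)\<close>
  with \<open>M = 2 / log\<^sup>\<theta> 2 + |A|\<close>.\<close>

lemma pk_nonneg: "pk V d \<gamma> k \<ge> 0"
  unfolding pk_def by (auto intro!: divide_nonneg_nonneg sum_nonneg)

lemma pk_bounds:
  assumes "finite V" "V \<noteq> {}"
    and "\<forall>v\<in>V. a \<le> real (Pv V d \<gamma> k v) \<and> real (Pv V d \<gamma> k v) \<le> b"
  shows "a / 2 \<le> pk V d \<gamma> k" and "pk V d \<gamma> k \<le> b / 2"
proof -
  have n: "real (card V) > 0" using assms(1,2) by (simp add: card_gt_0_iff)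
  have "real (card V) * a \<le> (\<Sum>v\<in>V. real (Pv V d \<gamma> k v))"
    using assms(3) by (intro sum_bounded_below) auto
  then show "a / 2 \<le> pk V d \<gamma> k" using n by (simp add: pk_def field_simps)
  have "(\<Sum>v\<in>V. real (Pv V d \<gamma> k v)) \<le> real (card V) * b"
    using assms(3) by (intro sum_bounded_above) auto
  then show "pk V d \<gamma> k \<le> b / 2" using n by (simp add: pk_def field_simps)
qed

lemma divide_one_plus_exp_antimono:
  fixes a c l l' :: real
  assumes "a \<ge> 0" "c > 0" "l \<le> l'"
  shows "a / (1 + exp (l' * c)) \<le> a / (1 + exp (l * c))"
  using assms by (intro divide_left_mono) (auto simp: add_pos_pos mult_right_mono)

lemma divide_one_plus_exp_strict_antimono:
  fixes a c l l' :: real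
  assumes "a > 0" "c > 0" "l < l'"
  shows "a / (1 + exp (l' * c)) < a / (1 + exp (l * c))"
  using assms by (intro divide_strict_left_mono) (auto simp: add_pos_pos mult_strict_right_mono)

lemma gfun_strict_antimono:
  assumes cpos: "\<forall>k\<in>{1..Kmax \<gamma> (card V)}. c k > 0"
    and k0: "k0 \<in> {1..Kmax \<gamma> (card V)}" "pk V d \<gamma> k0 > 0"
    and "l < l'"
  shows "gfun V d c \<gamma> l' < gfun V d c \<gamma> l"
  unfolding gfun_def
proof (rule sum_strict_mono_ex1)
  show "\<forall>k\<in>{1..Kmax \<gamma> (card V)}. c k * pk V d \<gamma> k / (1 + exp (l' * c k))
      \<le> c k * pk V d \<gamma> k / (1 + exp (l * c k))"
    using cpos \<open>l < l'\<close> by (auto intro!: divide_one_plus_exp_antimono simp: pk_nonneg)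
  show "\<exists>k\<in>{1..Kmax \<gamma> (card V)}. c k * pk V d \<gamma> k / (1 + exp (l' * c k))
      < c k * pk V d \<gamma> k / (1 + exp (l * c k))"
    using cpos k0 \<open>l < l'\<close> by (intro bexI[OF _ k0(1)] divide_one_plus_exp_strict_antimono) auto
qed simp

lemma continuous_on_gfun: "continuous_on S (gfun V d c \<gamma>)"
proof -
  have "\<And>l k. 1 + exp (l * c k) \<noteq> (0::real)"
    by (metis add_pos_pos exp_gt_zero less_irrefl zero_less_one)
  then show ?thesis unfolding gfun_def by (intro continuous_intros) auto
qed

lemma lamB_eq_root:
  assumes cpos: "\<forall>k\<in>{1..Kmax \<gamma> (card V)}. c k > 0"
    and k0: "k0 \<in> {1..Kmax \<gamma> (card V)}" "pk V d \<gamma> k0 > 0"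
    and "B < Bbar V d c \<gamma>" "0 \<le> x" "gfun V d c \<gamma> x = B"
  shows "lamB V d c \<gamma> B = x"
proof -
  have unique: "y = x" if "0 \<le> y" "gfun V d c \<gamma> y = B" for y
  proof (rule ccontr)
    assume "y \<noteq> x"
    then consider "y < x" | "x < y" by linarith
    then show False
      using gfun_strict_antimono[OF cpos k0, of y x] gfun_strict_antimono[OF cpos k0, of x y]
        that(2) assms(6) by cases (metis less_irrefl)+
  qed
  have "(THE l. 0 \<le> l \<and> gfun V d c \<gamma> l = B) = x"
    using assms(5,6) unique by (intro the_equality) blast+
  then show ?thesis using assms(4) by (simp add: lamB_def)
qed

lemma lamB_le_max:
  assumes cpos: "\<forall>k\<in>{1..Kmax \<gamma> (card V)}. c k > 0"
    and k0: "k0 \<in> {1..Kmax \<gamma> (card V)}" "pk V d \<gamma> k0 > 0"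
    and B: "B \<ge> gfun V d c \<gamma> l"
  shows "lamB V d c \<gamma> B \<le> max 0 l"
proof (cases "Bbar V d c \<gamma> \<le> B")
  case True
  then show ?thesis by (simp add: lamB_def)
next
  case False
  then have "B < gfun V d c \<gamma> 0" by (simp add: Bbar_def)
  with B have "0 < l"
    by (cases l "0::real" rule: linorder_cases) (use gfun_strict_antimono[OF cpos k0, of l 0] in auto)
  moreover from \<open>B < gfun V d c \<gamma> 0\<close> B
  obtain x where "0 \<le> x" "x \<le> l" "gfun V d c \<gamma> x = B"
    using IVT2'[of "gfun V d c \<gamma>" l B 0, OF B _ _ continuous_on_gfun] \<open>0 < l\<close> by auto
  ultimately show ?thesis
    using lamB_eq_root[OF cpos k0] False by auto
qed

lemma scale_eq:
  assumes "\<gamma> > 1" "k \<ge> 1" "\<gamma> ^ (k - 1) < x" "x \<le> \<gamma> ^ k"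
  shows "scale \<gamma> x = int k"
proof -
  have x: "x > 0" using assms by (smt (verit) zero_less_power)
  have "real k - 1 = log \<gamma> (\<gamma> ^ (k - 1))"
    using assms(1,2) by (simp add: log_nat_power of_nat_diff)
  also have "\<dots> < log \<gamma> x" using assms x by (subst log_less_cancel_iff) auto
  finally have "real k - 1 < log \<gamma> x" .
  moreover have "log \<gamma> x \<le> log \<gamma> (\<gamma> ^ k)" using assms x by (subst log_le_cancel_iff) auto
  ultimately show ?thesis
    using assms(1) unfolding scale_def by (intro ceiling_unique) (auto simp: log_nat_power)
qed

text \<open>The paper's \<open>(log p / c)(1 + t / log p)\<close> equals \<open>(log p + t) / c\<close> except at \<open>p = 1\<close>,
  where division by zero makes it \<open>0\<close>.\<close>
lemma exp_le_one_plus_scaled: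
  fixes c p t l :: real
  assumes "c > 0" "p > 0" "l \<le> max 0 ((ln p / c) * (1 + t / ln p))"
  shows "exp (l * c) \<le> 1 + p * exp t"
proof (cases "ln p = 0")
  case True
  then have "exp (l * c) \<le> 1" using assms by (simp add: mult_nonpos_nonneg)
  then show ?thesis using assms by (smt (verit) exp_gt_zero mult_pos_pos)
next
  case False
  then have "(ln p / c) * (1 + t / ln p) = (ln p + t) / c"
    using assms(1) by (simp add: field_simps)
  then have "l * c \<le> max 0 (ln p + t)"
    using assms(1,3) by (auto simp: max_def pos_le_divide_eq mult_nonpos_nonneg split: if_splits)
  then have "exp (l * c) \<le> exp (max 0 (ln p + t))" by simp
  also have "\<dots> \<le> exp 0 + exp (ln p + t)"
    by (simp add: max_def add_increasing less_imp_le)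
  also have "\<dots> = 1 + p * exp t" using assms(2) by (simp add: exp_add)
  finally show ?thesis .
qed

lemma pk_bounds_coherent:
  assumes "coherent V d \<gamma> A \<alpha> \<phi> lam" "V \<noteq> {}" "k \<in> {1..Kmax \<gamma> (card V)}"
  shows "0 < pk V d \<gamma> k" and "pk V d \<gamma> k \<le> A * \<gamma> ^ k / 2"
proof -
  have "finite V" "\<gamma> > 1" "\<alpha> > 0"
    and H1: "\<forall>v\<in>V. \<alpha> * \<gamma> ^ k \<le> real (Pv V d \<gamma> k v) \<and> real (Pv V d \<gamma> k v) \<le> A * \<gamma> ^ k"
    using assms(1,3) unfolding coherent_def geometry_def by auto
  then have "0 < \<alpha> * \<gamma> ^ k / 2" by simp
  also have "\<dots> \<le> pk V d \<gamma> k" using pk_bounds(1)[OF \<open>finite V\<close> assms(2) H1] .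
  finally show "0 < pk V d \<gamma> k" .
  show "pk V d \<gamma> k \<le> A * \<gamma> ^ k / 2" using pk_bounds(2)[OF \<open>finite V\<close> assms(2) H1] .
qed

lemma exp_lamB_le:
  assumes ccg: "coherent_cost_geometry V d c \<gamma> A \<alpha> \<phi> lam" and n: "card V \<ge> 2"
    and k: "k \<in> {1..Kmax \<gamma> (card V)}" "k_theta \<theta> \<alpha> \<gamma> (card V) \<le> real k"
    and B: "B \<ge> Bplus_theta V d c \<gamma> \<alpha> \<theta>"
  shows "exp (lamB V d c \<gamma> B * c k) \<le> 1 + pk V d \<gamma> k * ln (real (card V)) powr \<theta>"
proof -
  define p where "p = pk V d \<gamma> k"
  have cpos: "\<forall>k\<in>{1..Kmax \<gamma> (card V)}. c k > 0" and coh: "coherent V d \<gamma> A \<alpha> \<phi> lam"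
    using ccg unfolding coherent_cost_geometry_def by auto
  have "V \<noteq> {}" using n by auto
  then have p: "0 < p" using pk_bounds_coherent(1)[OF coh _ k(1)] by (simp add: p_def)
  have "lamB V d c \<gamma> B \<le> max 0 (lambda_theta V d c \<gamma> \<alpha> \<theta>)"
    using lamB_le_max[OF cpos k(1)] p B by (simp add: p_def Bplus_theta_def)
  also have "lambda_theta V d c \<gamma> \<alpha> \<theta> \<le> (ln p / c k) * (1 + \<theta> * ln (ln (real (card V))) / ln p)"
    unfolding lambda_theta_def Let_def p_def using k by (intro Min_le) auto
  finally show ?thesis
    using exp_le_one_plus_scaled[of "c k" p] cpos k(1) p n
    by (simp add: p_def powr_def max_def split: if_splits)
qed

lemma Qstar_ge:
  assumes ccg: "coherent_cost_geometry V d c \<gamma> A \<alpha> \<phi> lam"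
    and n: "card V \<ge> 2" and "\<theta> > 0"
    and k: "k \<in> {1..Kmax \<gamma> (card V)}" "k_theta \<theta> \<alpha> \<gamma> (card V) \<le> real k"
    and B: "B \<ge> Bplus_theta V d c \<gamma> \<alpha> \<theta>"
  shows "1 / ((2 / ln 2 powr \<theta> + \<bar>A\<bar>) * ln (real (card V)) powr \<theta> * \<gamma> ^ k)
    \<le> Qstar V d c \<gamma> B k"
proof -
  define p where "p = pk V d \<gamma> k"
  define L where "L = ln (real (card V)) powr \<theta>"
  have coh: "coherent V d \<gamma> A \<alpha> \<phi> lam" using ccg by (simp add: coherent_cost_geometry_def)
  then have g1: "\<gamma> > 1" by (simp add: coherent_def)
  have "V \<noteq> {}" using n by auto
  then have p_pos: "0 < p" and "p \<le> A * \<gamma> ^ k / 2"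
    using pk_bounds_coherent[OF coh _ k(1)] by (simp_all add: p_def)
  moreover have "A * \<gamma> ^ k / 2 \<le> \<bar>A\<bar> * \<gamma> ^ k"
    using g1 mult_right_mono[of "A / 2" "\<bar>A\<bar>" "\<gamma> ^ k"] by simp
  ultimately have p_le: "p \<le> \<bar>A\<bar> * \<gamma> ^ k" by linarith
  have ln2: "0 < ln 2 powr \<theta>" by simp
  have L: "ln 2 powr \<theta> \<le> L"
    using n \<open>\<theta> > 0\<close> by (auto simp: L_def intro!: powr_mono2)
  with ln2 have L_pos: "0 < L" by linarith
  have "2 + p * L \<le> (2 / ln 2 powr \<theta> + \<bar>A\<bar>) * L * \<gamma> ^ k"
  proof -
    have "1 \<le> \<gamma> ^ k" using g1 by simp
    then have "L \<le> L * \<gamma> ^ k" using L_pos mult_left_mono[of 1 "\<gamma> ^ k" L] by simp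
    with L have "ln 2 powr \<theta> \<le> L * \<gamma> ^ k" by linarith
    then have "2 \<le> 2 / ln 2 powr \<theta> * L * \<gamma> ^ k"
      using ln2 by (simp add: le_divide_eq)
    moreover have "p * L \<le> \<bar>A\<bar> * \<gamma> ^ k * L"
      using p_le L_pos by (intro mult_right_mono) auto
    ultimately show ?thesis by (simp add: algebra_simps)
  qed
  moreover have "exp (lamB V d c \<gamma> B * c k) \<le> 1 + p * L"
    using exp_lamB_le[OF ccg n k B] by (simp add: p_def L_def)
  moreover have "0 < 2 + p * L" using p_pos L_pos by (simp add: add_pos_pos)
  ultimately have "1 / ((2 / ln 2 powr \<theta> + \<bar>A\<bar>) * L * \<gamma> ^ k)
      \<le> 1 / (1 + exp (lamB V d c \<gamma> B * c k))"
    by (smt (verit) exp_gt_zero frac_le)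
  then show ?thesis by (simp add: Qstar_def L_def)
qed

theorem proposition2:
  fixes \<gamma> A \<alpha> \<phi> lam \<theta> :: real
  assumes "\<theta> > 0"
  shows "\<exists>M>0. \<forall>(V :: 'a set) d c.
           coherent_cost_geometry V d c \<gamma> A \<alpha> \<phi> lam \<longrightarrow>
           (\<forall>B. B \<ge> Bplus_theta V d c \<gamma> \<alpha> \<theta> \<longrightarrow>
                rich_with_const M \<theta> V d \<gamma> \<alpha> (Qmat V d c \<gamma> B))"
proof (intro exI[of _ "2 / ln 2 powr \<theta> + \<bar>A\<bar>"] conjI allI impI)
  show "0 < 2 / ln 2 powr \<theta> + \<bar>A\<bar>" by (simp add: add_pos_nonneg)
  fix V :: "'a set" and d c B
  assume ccg: "coherent_cost_geometry V d c \<gamma> A \<alpha> \<phi> lam"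
    and B: "B \<ge> Bplus_theta V d c \<gamma> \<alpha> \<theta>"
  show "rich_with_const (2 / ln 2 powr \<theta> + \<bar>A\<bar>) \<theta> V d \<gamma> \<alpha> (Qmat V d c \<gamma> B)"
    unfolding rich_with_const_def
  proof (intro ballI allI impI)
    fix i j k
    assume ij: "i \<in> V" "j \<in> V"
      and hk: "i \<noteq> j \<and> 1 \<le> k \<and> k \<le> Kmax \<gamma> (card V) \<and> k_theta \<theta> \<alpha> \<gamma> (card V) \<le> real k \<and>
        \<gamma> ^ (k - 1) < d i j \<and> d i j \<le> \<gamma> ^ k"
    have "finite V" "\<gamma> > 1"
      using ccg unfolding coherent_cost_geometry_def coherent_def geometry_def by auto
    then have "card V \<ge> 2" using ij hk card_mono[of V "{i, j}"] by auto
    moreover have "Qmat V d c \<gamma> B i j = Qstar V d c \<gamma> B k"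
      using scale_eq[of \<gamma> k "d i j"] \<open>\<gamma> > 1\<close> hk by (simp add: Qmat_def)
    ultimately show "1 / ((2 / ln 2 powr \<theta> + \<bar>A\<bar>) * ln (real (card V)) powr \<theta> * \<gamma> ^ k)
        \<le> Qmat V d c \<gamma> B i j"
      using Qstar_ge[OF ccg _ assms _ _ B] hk by auto
  qed
qed

end
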